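(* Let $\mathcal{A}=\{A_1,\dots,A_m\}$ be a bimodal collection of pairwise disjoint nonempty subsets of a finite abelian group $G$, with internal difference groups $H_1,\dots,H_m$, such that $|A_1|<|H_1|$ and $|A_i|=|H_i|$ for all $2\le i\le m$. Then: (1) for all $2\le i\le m$, $A_i$ is a coset of $H_i$ and $H_i$ is a subgroup of $H_1$; (2) $A_1$ is a proper subset of a coset of $H_1$ and is a union of cosets of the subgroup $D=H_2+H_3+\dots+H_m$.
   Context: $G$ is written additively. The internal difference group $H_i$ of $A_i$ is the subgroup generated by all $x-y$ with $x,y\in A_i$; $A_i$ lies in a single coset of $H_i$ and $|A_i|\le|H_i|$. A collection $\{A_1,\dots,A_m\}$ of pairwise disjoint subsets of $G$ is bimodal if for every $i$ and every $\delta\in G\setminus\{0\}$, the number $N_i(\delta)$ of pairs $(a,b)$ with $a\in A_i$, $b\in A_j$ for some $j\neq i$, and $a-b=\delta$, satisfies $N_i(\delta)\in\{0,|A_i|\}$. An empty sum of subgroups is $\{0\}$. *)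

theory Defs
  imports Main "HOL-Computational_Algebra.Group_Closure"
begin

definition diff_group :: "'a::ab_group_add set \<Rightarrow> 'a set" where
  "diff_group A = group_closure {x - y | x y. x \<in> A \<and> y \<in> A}"

definition N_count :: "(nat \<Rightarrow> 'a::ab_group_add set) \<Rightarrow> nat \<Rightarrow> nat \<Rightarrow> 'a \<Rightarrow> nat" where
  "N_count A m i \<delta> = card {(a, b). a \<in> A i \<and> (\<exists>j\<in>{1..m}. j \<noteq> i \<and> b \<in> A j) \<and> a - b = \<delta>}"

definition bimodal :: "(nat \<Rightarrow> 'a::ab_group_add set) \<Rightarrow> nat \<Rightarrow> bool" where
  "bimodal A m \<longleftrightarrow> (\<forall>i\<in>{1..m}. \<forall>\<delta>. \<delta> \<noteq> 0 \<longrightarrow> N_count A m i \<delta> \<in> {0, card (A i)})"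

definition is_coset :: "'a::ab_group_add set \<Rightarrow> 'a set \<Rightarrow> bool" where
  "is_coset C H \<longleftrightarrow> (\<exists>x. C = (\<lambda>h. x + h) ` H)"

definition is_subgroup :: "'a::ab_group_add set \<Rightarrow> bool" where
  "is_subgroup H \<longleftrightarrow> 0 \<in> H \<and> (\<forall>x\<in>H. \<forall>y\<in>H. x - y \<in> H)"

definition sumset :: "'a::ab_group_add set \<Rightarrow> 'a set \<Rightarrow> 'a set" where
  "sumset X Y = {x + y | x y. x \<in> X \<and> y \<in> Y}"

definition subgroup_sum :: "(nat \<Rightarrow> 'a::ab_group_add set) \<Rightarrow> nat list \<Rightarrow> 'a set" where
  "subgroup_sum H is = foldr (\<lambda>i S. sumset (H i) S) is {0}"

definition union_of_cosets :: "'a::ab_group_add set \<Rightarrow> 'a set \<Rightarrow> bool" where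
  "union_of_cosets A D \<longleftrightarrow> (\<exists>X. A = (\<Union>x\<in>X. (\<lambda>d. x + d) ` D))"

end

theory Submission
  imports Defs
begin

text \<open>Write \<open>B\<^sub>i\<close> for the union of the members of the collection other than \<open>A\<^sub>i\<close>.
  For \<open>a \<in> A\<^sub>i\<close> and \<open>b \<in> B\<^sub>i\<close>, bimodality applied to \<open>\<delta> = a - b \<noteq> 0\<close> forces \<open>A\<^sub>i - \<delta> \<subseteq> B\<^sub>i\<close>,
  so \<open>B\<^sub>i\<close> is stable under translation by \<open>A\<^sub>i - A\<^sub>i\<close> and hence by \<open>H\<^sub>i\<close>. For \<open>i \<ge> 2\<close> the set
  \<open>A\<^sub>i\<close> is an \<open>H\<^sub>i\<close>-coset, so the union \<open>U\<close> of the whole collection is \<open>H\<^sub>i\<close>-periodic too.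
  If some \<open>x \<in> A\<^sub>1\<close> had \<open>x + h \<notin> A\<^sub>1\<close> with \<open>h \<in> H\<^sub>i\<close>, then \<open>x + h \<in> B\<^sub>1\<close>, so
  \<open>x + h + H\<^sub>1 \<subseteq> B\<^sub>1 \<subseteq> U\<close> and \<open>x + H\<^sub>1 \<subseteq> U\<close>; as \<open>x \<notin> B\<^sub>1\<close> and \<open>B\<^sub>1\<close> is \<open>H\<^sub>1\<close>-periodic,
  this gives \<open>x + H\<^sub>1 \<subseteq> A\<^sub>1\<close>, contradicting \<open>|A\<^sub>1| < |H\<^sub>1|\<close>. So \<open>A\<^sub>1\<close> is periodic under every
  \<open>H\<^sub>i\<close>, which yields \<open>H\<^sub>i \<subseteq> H\<^sub>1\<close> and periodicity under their sum.\<close>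

definition periodic :: "'a::ab_group_add set \<Rightarrow> 'a set \<Rightarrow> bool" where
  "periodic S H \<longleftrightarrow> (\<forall>x\<in>S. \<forall>h\<in>H. x + h \<in> S)"

definition others :: "(nat \<Rightarrow> 'a set) \<Rightarrow> nat \<Rightarrow> nat \<Rightarrow> 'a set" where
  "others A m i = {b. \<exists>j\<in>{1..m}. j \<noteq> i \<and> b \<in> A j}"

lemma periodicD: "periodic S H \<Longrightarrow> x \<in> S \<Longrightarrow> h \<in> H \<Longrightarrow> x + h \<in> S"
  unfolding periodic_def by blast

lemma periodic_Un: "periodic S H \<Longrightarrow> periodic T H \<Longrightarrow> periodic (S \<union> T) H"
  unfolding periodic_def by blast

lemma periodic_subgroup_sum:
  assumes "\<forall>k\<in>set ks. periodic S (H k)"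
  shows "periodic S (subgroup_sum H ks)"
  using assms
proof (induction ks)
  case Nil
  then show ?case by (simp add: periodic_def subgroup_sum_def)
next
  case (Cons k ks)
  show ?case
    unfolding periodic_def
  proof (intro ballI)
    fix x d assume x: "x \<in> S" and "d \<in> subgroup_sum H (k # ks)"
    then obtain h s where d: "d = h + s" and h: "h \<in> H k" and s: "s \<in> subgroup_sum H ks"
      unfolding subgroup_sum_def sumset_def by auto
    have "x + h \<in> S" using Cons.prems x h by (simp add: periodic_def)
    then have "x + h + s \<in> S" using Cons s by (simp add: periodic_def)
    then show "x + d \<in> S" by (simp add: d add.assoc)
  qed
qed

lemma zero_in_subgroup_sum: "\<forall>k\<in>set ks. 0 \<in> H k \<Longrightarrow> 0 \<in> subgroup_sum H ks"
proof (induction ks)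
  case Nil
  then show ?case by (simp add: subgroup_sum_def)
next
  case (Cons k ks)
  then show ?case unfolding subgroup_sum_def sumset_def by force
qed

lemma union_of_cosets_if_periodic:
  assumes "periodic S D" and "0 \<in> D"
  shows "union_of_cosets S D"
proof -
  have "S = (\<Union>x\<in>S. (\<lambda>d. x + d) ` D)"
    using assms by (force simp: periodic_def)
  then show ?thesis unfolding union_of_cosets_def by blast
qed

lemma diff_in_diff_group: "a \<in> A \<Longrightarrow> b \<in> A \<Longrightarrow> a - b \<in> diff_group A"
  unfolding diff_group_def by (rule group_closure.base) blast

lemma zero_in_diff_group: "0 \<in> diff_group A"
  unfolding diff_group_def by simp

lemma is_subgroup_diff_group: "is_subgroup (diff_group A)"
  unfolding is_subgroup_def diff_group_def by (simp add: group_closure.diff)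

lemma periodic_diff_group:
  assumes shift: "\<forall>x\<in>S. \<forall>a\<in>A. \<forall>b\<in>A. x + (a - b) \<in> S"
  shows "periodic S (diff_group A)"
proof -
  have "\<forall>x\<in>S. x + g \<in> S \<and> x - g \<in> S" if "g \<in> group_closure {a - b | a b. a \<in> A \<and> b \<in> A}" for g
    using that
  proof induction
    case (base g)
    show ?case
    proof (cases "g = 0")
      case False
      then obtain a b where g: "g = a - b" "a \<in> A" "b \<in> A" using base by blast
      have "x - g = x + (b - a)" for x by (simp add: g)
      then show ?thesis using shift g by metis
    qed simp
  next
    case (diff g g')
    have "x + (g - g') = (x + g) - g'" "x - (g - g') = (x - g) + g'" for x
      by (simp_all add: algebra_simps)
    then show ?case using diff by metis
  qed
  then show ?thesis unfolding periodic_def diff_group_def by blast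
qed

lemma periodic_imp_subset_diff_group:
  assumes "periodic A H" and "a \<in> A"
  shows "H \<subseteq> diff_group A"
proof
  fix h assume "h \<in> H"
  then have "a + h \<in> A" using assms by (simp add: periodic_def)
  then have "(a + h) - a \<in> diff_group A" using assms(2) by (rule diff_in_diff_group)
  then show "h \<in> diff_group A" by simp
qed

lemma card_translate:
  fixes H :: "'a::ab_group_add set"
  shows "card ((\<lambda>h. c + h) ` H) = card H"
  by (simp add: card_image inj_on_def)

lemma subset_coset_diff_group: "c \<in> A \<Longrightarrow> A \<subseteq> (\<lambda>h. c + h) ` diff_group A"
  by (force intro: image_eqI[where x = "_ - c"] diff_in_diff_group)

lemma coset_diff_group_if_card_eq:
  fixes A :: "'a::{ab_group_add, finite} set"
  assumes "card A = card (diff_group A)" and "c \<in> A"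
  shows "A = (\<lambda>h. c + h) ` diff_group A"
  using card_subset_eq[OF _ subset_coset_diff_group[OF assms(2)]] assms(1)
  by (simp add: card_translate)

lemma psubset_coset_diff_group_if_card_less:
  fixes A :: "'a::{ab_group_add, finite} set"
  assumes "card A < card (diff_group A)" and "c \<in> A"
  shows "A \<subset> (\<lambda>h. c + h) ` diff_group A"
  using subset_coset_diff_group[OF assms(2)] assms(1) card_translate[of c "diff_group A"]
  by auto

lemma periodic_coset_diff_group: "periodic ((\<lambda>h. c + h) ` diff_group A) (diff_group A)"
  unfolding periodic_def diff_group_def
  by (auto simp: add.assoc intro!: image_eqI group_closure_add)

lemma periodic_if_card_eq_diff_group:
  fixes A :: "'a::{ab_group_add, finite} set"
  assumes "card A = card (diff_group A)"
  shows "periodic A (diff_group A)"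
proof (cases "A = {}")
  case False
  then obtain c where "c \<in> A" by blast
  then show ?thesis
    using coset_diff_group_if_card_eq[OF assms] periodic_coset_diff_group by metis
qed (simp add: periodic_def)

lemma disjoint_others:
  assumes "\<forall>i\<in>{1..m}. \<forall>j\<in>{1..m}. i \<noteq> j \<longrightarrow> A i \<inter> A j = {}" and "i \<in> {1..m}"
  shows "A i \<inter> others A m i = {}"
  using assms unfolding others_def by blast

lemma Union_eq_Un_others: "i \<in> {1..m} \<Longrightarrow> (\<Union>j\<in>{1..m}. A j) = A i \<union> others A m i"
  unfolding others_def by auto

lemma mem_Union_iff_others:
  "i \<in> {1..m} \<Longrightarrow> x \<in> (\<Union>j\<in>{1..m}. A j) \<longleftrightarrow> x \<in> A i \<or> x \<in> others A m i"
  unfolding others_def by auto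

lemma bimodal_shift_others:
  fixes A :: "nat \<Rightarrow> 'a::{ab_group_add, finite} set"
  assumes disj: "\<forall>i\<in>{1..m}. \<forall>j\<in>{1..m}. i \<noteq> j \<longrightarrow> A i \<inter> A j = {}"
    and bim: "bimodal A m" and i: "i \<in> {1..m}"
    and b: "b \<in> others A m i" and a: "a \<in> A i" and a': "a' \<in> A i"
  shows "b + (a' - a) \<in> others A m i"
proof -
  define \<delta> where "\<delta> = a - b"
  have "\<delta> \<noteq> 0" using disjoint_others[OF disj i] a b by (auto simp: \<delta>_def)
  define S where "S = {(x, y). x \<in> A i \<and> (\<exists>j\<in>{1..m}. j \<noteq> i \<and> y \<in> A j) \<and> x - y = \<delta>}"
  define T where "T = {x \<in> A i. x - \<delta> \<in> others A m i}"
  have "S = (\<lambda>x. (x, x - \<delta>)) ` T"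
    unfolding S_def T_def others_def by (force simp: algebra_simps image_iff)
  then have card_S: "card S = card T" by (simp add: card_image inj_on_def)
  have "a \<in> T" using a b by (simp add: T_def \<delta>_def)
  then have "card S \<noteq> 0" by (simp add: card_S card_gt_0_iff[symmetric]) (auto intro: finite_subset)
  moreover have "card S \<in> {0, card (A i)}"
    using bim i \<open>\<delta> \<noteq> 0\<close> unfolding bimodal_def N_count_def S_def by blast
  ultimately have "card T = card (A i)" by (simp add: card_S)
  then have "T = A i" by (simp add: T_def card_subset_eq)
  then have "a' - \<delta> \<in> others A m i" using a' by (auto simp: T_def)
  moreover have "a' - \<delta> = b + (a' - a)" by (simp add: \<delta>_def algebra_simps)
  ultimately show ?thesis by simp
qed

lemma periodic_others:
  fixes A :: "nat \<Rightarrow> 'a::{ab_group_add, finite} set"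
  assumes "\<forall>i\<in>{1..m}. \<forall>j\<in>{1..m}. i \<noteq> j \<longrightarrow> A i \<inter> A j = {}"
    and "bimodal A m" and "i \<in> {1..m}"
  shows "periodic (others A m i) (diff_group (A i))"
  using bimodal_shift_others[OF assms] by (blast intro: periodic_diff_group)

lemma periodic_under_other_diff_group:
  fixes A :: "nat \<Rightarrow> 'a::{ab_group_add, finite} set"
  assumes disj: "\<forall>i\<in>{1..m}. \<forall>j\<in>{1..m}. i \<noteq> j \<longrightarrow> A i \<inter> A j = {}"
    and bim: "bimodal A m" and k: "k \<in> {1..m}" and i: "i \<in> {1..m}"
    and small: "card (A k) < card (diff_group (A k))"
    and Ai_periodic: "periodic (A i) (diff_group (A i))"
  shows "periodic (A k) (diff_group (A i))"
  unfolding periodic_def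
proof (intro ballI, rule ccontr)
  fix x h assume x: "x \<in> A k" and h: "h \<in> diff_group (A i)" and out: "x + h \<notin> A k"
  let ?U = "\<Union>j\<in>{1..m}. A j"
  have U_periodic: "periodic ?U (diff_group (A i))"
    using Union_eq_Un_others[OF i] periodic_Un[OF Ai_periodic periodic_others[OF disj bim i]]
    by metis
  have "x \<in> ?U" using k x by (rule UN_I)
  then have "x + h \<in> ?U" using h by (rule periodicD[OF U_periodic])
  then have xh: "x + h \<in> others A m k" using mem_Union_iff_others[OF k] out by metis
  have "x + y \<in> A k" if y: "y \<in> diff_group (A k)" for y
  proof -
    have "x + h + y \<in> others A m k" using periodicD[OF periodic_others[OF disj bim k] xh y] .
    then have "x + h + y \<in> ?U" using mem_Union_iff_others[OF k] by metis
    moreover have "- h \<in> diff_group (A i)" using h by (simp add: diff_group_def)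
    ultimately have "x + h + y + - h \<in> ?U" by (rule periodicD[OF U_periodic])
    then have in_U: "x + y \<in> ?U" by (simp add: algebra_simps)
    have "x + y \<notin> others A m k"
    proof
      assume "x + y \<in> others A m k"
      moreover have "- y \<in> diff_group (A k)" using y by (simp add: diff_group_def)
      ultimately have "x + y + - y \<in> others A m k" by (rule periodicD[OF periodic_others[OF disj bim k]])
      then show False using disjoint_others[OF disj k] x by auto
    qed
    then show ?thesis using in_U mem_Union_iff_others[OF k] by metis
  qed
  then have "(\<lambda>y. x + y) ` diff_group (A k) \<subseteq> A k" by (simp add: image_subset_iff)
  then have "card (diff_group (A k)) \<le> card (A k)"
    using card_mono[OF finite] card_translate by metis
  then show False using small by simp
qed

theorem proposition3p13:
  fixes A :: "nat \<Rightarrow> 'a::{ab_group_add, finite} set"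
    and m :: nat
  assumes m: "1 \<le> m"
    and disj: "\<forall>i\<in>{1..m}. \<forall>j\<in>{1..m}. i \<noteq> j \<longrightarrow> A i \<inter> A j = {}"
    and nonempty: "\<forall>i\<in>{1..m}. A i \<noteq> {}"
    and bim: "bimodal A m"
    and first: "card (A 1) < card (diff_group (A 1))"
    and rest: "\<forall>i\<in>{2..m}. card (A i) = card (diff_group (A i))"
  shows "(\<forall>i\<in>{2..m}. is_coset (A i) (diff_group (A i))
            \<and> is_subgroup (diff_group (A i)) \<and> diff_group (A i) \<subseteq> diff_group (A 1))
       \<and> (\<exists>C. is_coset C (diff_group (A 1)) \<and> A 1 \<subset> C)
       \<and> union_of_cosets (A 1) (subgroup_sum (\<lambda>i. diff_group (A i)) [2..<m+1])"
proof -
  have one: "1 \<in> {1..m}" using m by simp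
  obtain a where a: "a \<in> A 1" using nonempty one by blast
  have A1_periodic: "periodic (A 1) (diff_group (A i))" if i: "i \<in> {2..m}" for i
  proof -
    have "i \<in> {1..m}" using i by simp
    moreover have "periodic (A i) (diff_group (A i))"
      using rest i by (simp add: periodic_if_card_eq_diff_group)
    ultimately show ?thesis using periodic_under_other_diff_group[OF disj bim one _ first] by blast
  qed
  have "is_coset (A i) (diff_group (A i))" if i: "i \<in> {2..m}" for i
  proof -
    obtain c where "c \<in> A i" using nonempty i by fastforce
    then show ?thesis
      using coset_diff_group_if_card_eq rest i unfolding is_coset_def by blast
  qed
  moreover have "diff_group (A i) \<subseteq> diff_group (A 1)" if "i \<in> {2..m}" for i
    using periodic_imp_subset_diff_group[OF A1_periodic[OF that] a] .
  moreover have "A 1 \<subset> (\<lambda>h. a + h) ` diff_group (A 1)"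
    using psubset_coset_diff_group_if_card_less[OF first a] .
  moreover have "union_of_cosets (A 1) (subgroup_sum (\<lambda>i. diff_group (A i)) [2..<m+1])"
  proof (intro union_of_cosets_if_periodic periodic_subgroup_sum zero_in_subgroup_sum ballI)
    fix k assume "k \<in> set [2..<m+1]"
    then have "k \<in> {2..m}" by auto
    then show "periodic (A 1) (diff_group (A k))" by (rule A1_periodic)
  qed (rule zero_in_diff_group)
  ultimately show ?thesis
    unfolding is_coset_def by (blast intro: is_subgroup_diff_group)
qed

end
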